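(* Fix $d\in[0,D]$ and consider the convex optimization problem \[ U(d)=\min_{\{E_n\},\{t_n\}} \ \sum_{n=1}^N E_n\left(1+\frac{h_n}{g_n}\right) \] subject to \[ d\le \sum_{n=1}^N t_n W\ln\left(1+\frac{E_n h_n}{t_n\sigma^2 W}\right),\qquad 2\sum_{n=1}^N t_n\le T-\frac{Ld}{f_B},\qquad E_n\ge 0,\ t_n\ge 0\ \ \forall n. \] Let $(\{E_n\},\{t_n\})$ be an optimal solution such that, for each $n$, either $E_n=t_n=0$ or both $E_n>0$ and $t_n>0$. Let $\mathcal P_T=\{n: E_n>0,\ t_n>0\}$, and define $\mathrm{SNR}_n^T=\frac{E_n h_n}{t_n\sigma^2 W}$ for $n\in\mathcal P_T$. Then \[ \mathrm{SNR}_i^T=\mathrm{SNR}_j^T \quad\text{for all } i,j\in\mathcal P_T, \] i.e., this quantity takes a common value $\mathrm{SNR}^T$.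
   Context: All parameters $N, h_n, g_n, W, \sigma^2, L, D, T, f_B$ are given positive constants, and $n$ ranges over $\{1,\dots,N\}$. The term $t_n W\ln\left(1+\frac{E_n h_n}{t_n\sigma^2W}\right)$ is interpreted as $0$ when $t_n=0$. *)

theory Defs
  imports Complex_Main
begin

definition rate :: "real \<Rightarrow> real \<Rightarrow> real \<Rightarrow> real \<Rightarrow> real \<Rightarrow> real" where
  "rate W \<sigma>2 h E t = (if t = 0 then 0 else t * W * ln (1 + E * h / (t * \<sigma>2 * W)))"

definition energy_obj :: "nat \<Rightarrow> (nat \<Rightarrow> real) \<Rightarrow> (nat \<Rightarrow> real) \<Rightarrow> (nat \<Rightarrow> real) \<Rightarrow> real" where
  "energy_obj N h g E = (\<Sum>n=1..N. E n * (1 + h n / g n))"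

definition feasible ::
  "nat \<Rightarrow> (nat \<Rightarrow> real) \<Rightarrow> real \<Rightarrow> real \<Rightarrow> real \<Rightarrow> real \<Rightarrow> real
   \<Rightarrow> real \<Rightarrow> (nat \<Rightarrow> real) \<Rightarrow> (nat \<Rightarrow> real) \<Rightarrow> bool" where
  "feasible N h W \<sigma>2 L T fB d E t \<longleftrightarrow>
     d \<le> (\<Sum>n=1..N. rate W \<sigma>2 (h n) (E n) (t n)) \<and>
     2 * (\<Sum>n=1..N. t n) \<le> T - L * d / fB \<and>
     (\<forall>n\<in>{1..N}. E n \<ge> 0 \<and> t n \<ge> 0)"

definition optimal ::
  "nat \<Rightarrow> (nat \<Rightarrow> real) \<Rightarrow> (nat \<Rightarrow> real) \<Rightarrow> real \<Rightarrow> real \<Rightarrow> real \<Rightarrow> real \<Rightarrow> real \<Rightarrow> real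
   \<Rightarrow> (nat \<Rightarrow> real) \<Rightarrow> (nat \<Rightarrow> real) \<Rightarrow> bool" where
  "optimal N h g W \<sigma>2 L T fB d E t \<longleftrightarrow>
     feasible N h W \<sigma>2 L T fB d E t \<and>
     (\<forall>E' t'. feasible N h W \<sigma>2 L T fB d E' t' \<longrightarrow> energy_obj N h g E \<le> energy_obj N h g E')"

end

theory Submission imports Defs begin

(* Suppose two active users i and j had different SNRs. Shift transmission time and
   rate between them, keeping the total time and the total rate fixed. The weighted energy
   is a smooth function of the shift whose gradient is given by the weighted marginal costs
   of time and of rate of the two users; if these marginal costs differed, moving against
   the difference would strictly lower the energy, contradicting optimality. Equal marginal
   rate costs fix the ratio of the two weights, and then equal marginal time costs force
   ln (1 + x) - x / (1 + x) to agree at both SNRs; this function is strictly increasing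
   for x > 0. *)

definition energy_for_rate :: "real \<Rightarrow> real \<Rightarrow> real \<Rightarrow> real \<Rightarrow> real" where
  "energy_for_rate W k t R = t / k * (exp (R / (t * W)) - 1)"

(* Partial derivatives of energy_for_rate W k t R in t and in R, written in terms of the
   SNR x = exp (R / (t * W)) - 1. *)
definition marginal_time_cost :: "real \<Rightarrow> real \<Rightarrow> real" where
  "marginal_time_cost k x = (x - (1 + x) * ln (1 + x)) / k"

definition marginal_rate_cost :: "real \<Rightarrow> real \<Rightarrow> real \<Rightarrow> real" where
  "marginal_rate_cost W k x = (1 + x) / (k * W)"

lemma rate_energy_for_rate:
  assumes "t > 0" "W > 0" "\<sigma>2 > 0" "h > 0"
  shows "rate W \<sigma>2 h (energy_for_rate W (h / (\<sigma>2 * W)) t R) t = R"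
proof -
  have "energy_for_rate W (h / (\<sigma>2 * W)) t R * h / (t * \<sigma>2 * W) = exp (R / (t * W)) - 1"
    using assms by (simp add: energy_for_rate_def field_simps)
  then show ?thesis
    using assms by (simp add: rate_def)
qed

lemma energy_for_rate_rate:
  assumes "t > 0" "W > 0" "\<sigma>2 > 0" "h > 0" "E \<ge> 0"
  shows "energy_for_rate W (h / (\<sigma>2 * W)) t (rate W \<sigma>2 h E t) = E"
proof -
  have "0 \<le> E * h / (t * \<sigma>2 * W)"
    using assms by simp
  then have "exp (rate W \<sigma>2 h E t / (t * W)) = 1 + E * h / (t * \<sigma>2 * W)"
    using assms by (simp add: rate_def add_pos_nonneg)
  then show ?thesis
    using assms by (simp add: energy_for_rate_def)
qed

lemma energy_for_rate_nonneg:
  assumes "k > 0" "t > 0" "W > 0" "R \<ge> 0"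
  shows "energy_for_rate W k t R \<ge> 0"
  using assms by (simp add: energy_for_rate_def)

lemma energy_for_rate_shift_has_derivative:
  assumes "t > 0" "k > 0" "W > 0" "x > -1" "R = t * W * ln (1 + x)"
  shows "((\<lambda>s. energy_for_rate W k (t + a * s) (R + b * s)) has_real_derivative
           a * marginal_time_cost k x + b * marginal_rate_cost W k x) (at 0)"
proof -
  define D where "D = (b * (t * W) - R * (a * W)) / (t * W)\<^sup>2"
  have "((\<lambda>s. (t + a * s) / k * (exp ((R + b * s) / ((t + a * s) * W)) - 1)) has_real_derivative
          a / k * (exp (R / (t * W)) - 1) + t / k * (exp (R / (t * W)) * D)) (at 0)"
    using assms(1-3) by (auto intro!: derivative_eq_intros simp: D_def power2_eq_square field_simps)
  moreover have "t * D = b / W - a * ln (1 + x)"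
    using assms by (simp add: D_def power2_eq_square field_simps)
  moreover have "exp (R / (t * W)) = 1 + x"
    using assms by simp
  ultimately have "((\<lambda>s. energy_for_rate W k (t + a * s) (R + b * s)) has_real_derivative
          a / k * x + (1 + x) / k * (b / W - a * ln (1 + x))) (at 0)"
    by (simp add: energy_for_rate_def mult.left_commute)
  also have "a / k * x + (1 + x) / k * (b / W - a * ln (1 + x))
             = a * marginal_time_cost k x + b * marginal_rate_cost W k x"
    using assms by (simp add: marginal_time_cost_def marginal_rate_cost_def field_simps)
  finally show ?thesis .
qed

lemma energy_for_rate_pair_shift_has_derivative:
  assumes "t1 > 0" "t2 > 0" "k1 > 0" "k2 > 0" "W > 0" "x1 > -1" "x2 > -1"
    and "R1 = t1 * W * ln (1 + x1)" "R2 = t2 * W * ln (1 + x2)"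
  shows "((\<lambda>s. c1 * energy_for_rate W k1 (t1 + a * s) (R1 + b * s)
              + c2 * energy_for_rate W k2 (t2 - a * s) (R2 - b * s)) has_real_derivative
           a * (c1 * marginal_time_cost k1 x1 - c2 * marginal_time_cost k2 x2)
         + b * (c1 * marginal_rate_cost W k1 x1 - c2 * marginal_rate_cost W k2 x2)) (at 0)"
proof -
  have "((\<lambda>s. c1 * energy_for_rate W k1 (t1 + a * s) (R1 + b * s)
              + c2 * energy_for_rate W k2 (t2 + (-a) * s) (R2 + (-b) * s)) has_real_derivative
           c1 * (a * marginal_time_cost k1 x1 + b * marginal_rate_cost W k1 x1)
         + c2 * ((-a) * marginal_time_cost k2 x2 + (-b) * marginal_rate_cost W k2 x2)) (at 0)"
    using assms by (intro DERIV_add DERIV_cmult energy_for_rate_shift_has_derivative)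
  then show ?thesis
    by (simp add: algebra_simps)
qed

lemma sum_cong_except_pair:
  fixes f g :: "'a \<Rightarrow> 'b::ab_group_add"
  assumes "finite S" "i \<in> S" "j \<in> S" "i \<noteq> j" "\<forall>n\<in>S - {i, j}. f n = g n"
  shows "sum f S = sum g S + (f i - g i) + (f j - g j)"
proof -
  have "sum (\<lambda>n. f n - g n) S = sum (\<lambda>n. f n - g n) {i, j}"
    by (rule sum.mono_neutral_right) (use assms in auto)
  then show ?thesis
    using assms by (simp add: sum_subtractf algebra_simps)
qed

lemma feasible_update_pair:
  assumes "feasible N h W \<sigma>2 L T fB d E t" "i \<in> {1..N}" "j \<in> {1..N}" "i \<noteq> j"
    and "0 \<le> Ei" "0 \<le> Ej" "0 \<le> ti" "0 \<le> tj" "ti + tj = t i + t j"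
    and "rate W \<sigma>2 (h i) Ei ti + rate W \<sigma>2 (h j) Ej tj
         = rate W \<sigma>2 (h i) (E i) (t i) + rate W \<sigma>2 (h j) (E j) (t j)"
  shows "feasible N h W \<sigma>2 L T fB d (E(i := Ei, j := Ej)) (t(i := ti, j := tj))"
proof -
  let ?E' = "E(i := Ei, j := Ej)" and ?t' = "t(i := ti, j := tj)"
  have "(\<Sum>n=1..N. rate W \<sigma>2 (h n) (?E' n) (?t' n)) = (\<Sum>n=1..N. rate W \<sigma>2 (h n) (E n) (t n))"
    using sum_cong_except_pair[of "{1..N}" i j "\<lambda>n. rate W \<sigma>2 (h n) (?E' n) (?t' n)"
        "\<lambda>n. rate W \<sigma>2 (h n) (E n) (t n)"] assms(2-4,10)
    by simp
  moreover have "(\<Sum>n=1..N. ?t' n) = (\<Sum>n=1..N. t n)"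
    using sum_cong_except_pair[of "{1..N}" i j ?t' t] assms(2-4,9)
    by simp
  ultimately show ?thesis
    using assms(1,5-8) by (simp add: feasible_def)
qed

lemma energy_obj_update_pair:
  assumes "i \<in> {1..N}" "j \<in> {1..N}" "i \<noteq> j"
  shows "energy_obj N h g (E(i := Ei, j := Ej))
         = energy_obj N h g E + (Ei - E i) * (1 + h i / g i) + (Ej - E j) * (1 + h j / g j)"
proof -
  let ?E' = "E(i := Ei, j := Ej)"
  have "energy_obj N h g ?E' = energy_obj N h g E
          + (?E' i * (1 + h i / g i) - E i * (1 + h i / g i))
          + (?E' j * (1 + h j / g j) - E j * (1 + h j / g j))"
    unfolding energy_obj_def by (rule sum_cong_except_pair) (use assms in auto)
  moreover have "?E' i = Ei" "?E' j = Ej"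
    using assms by simp_all
  ultimately show ?thesis
    by (simp only: left_diff_distrib)
qed

lemma ln_one_plus_minus_frac_strict_mono:
  fixes x y :: real
  assumes "0 < x" "x < y"
  shows "ln (1 + x) - x / (1 + x) < ln (1 + y) - y / (1 + y)"
proof -
  have "1 - (1 + x) / (1 + y) \<le> ln (1 + y) - ln (1 + x)"
    using assms ln_le_minus_one[of "(1 + x) / (1 + y)"] by (simp add: ln_div)
  moreover have "y / (1 + y) - x / (1 + x) = (y - x) / ((1 + y) * (1 + x))"
    and "1 - (1 + x) / (1 + y) = (y - x) / (1 + y)"
    using assms by (simp_all add: field_simps)
  moreover have "(y - x) / ((1 + y) * (1 + x)) < (y - x) / (1 + y)"
    using assms by (simp add: divide_strict_left_mono)
  ultimately show ?thesis
    by linarith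
qed

lemma eq_snr_if_eq_marginal_costs:
  assumes "k1 > 0" "k2 > 0" "c1 > 0" "W > 0" "x1 > 0" "x2 > 0"
    and time: "c1 * marginal_time_cost k1 x1 = c2 * marginal_time_cost k2 x2"
    and rate: "c1 * marginal_rate_cost W k1 x1 = c2 * marginal_rate_cost W k2 x2"
  shows "x1 = x2"
proof -
  define \<phi> :: "real \<Rightarrow> real" where "\<phi> x = ln (1 + x) - x / (1 + x)" for x
  have time_cost: "c * marginal_time_cost k x = - (c * (1 + x) / k) * \<phi> x"
    if "x > 0" for c k x
  proof -
    have "(1 + x) * \<phi> x = (1 + x) * ln (1 + x) - x"
      using that by (simp add: \<phi>_def right_diff_distrib)
    then have "x - (1 + x) * ln (1 + x) = - ((1 + x) * \<phi> x)"
      by simp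
    then show ?thesis
      by (simp add: marginal_time_cost_def)
  qed
  have rate_cost: "c * (1 + x) / k = W * (c * marginal_rate_cost W k x)" for c k x
    using assms by (simp add: marginal_rate_cost_def)
  define K where "K = c1 * (1 + x1) / k1"
  have K_eq: "K = c2 * (1 + x2) / k2"
    using rate rate_cost by (simp add: K_def)
  have "K * \<phi> x1 = - (c1 * marginal_time_cost k1 x1)"
    using time_cost[of x1 c1 k1] assms by (simp add: K_def)
  also have "\<dots> = K * \<phi> x2"
    using time time_cost[of x2 c2 k2] assms K_eq by simp
  finally have "K * \<phi> x1 = K * \<phi> x2" .
  moreover have "K > 0"
    using assms by (simp add: K_def)
  ultimately have "\<phi> x1 = \<phi> x2"
    by simp
  then show ?thesis
    using ln_one_plus_minus_frac_strict_mono[of x1 x2] ln_one_plus_minus_frac_strict_mono[of x2 x1]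
      assms by (force simp: \<phi>_def)
qed

lemma optimal_pair_exchange_lower_bound:
  assumes opt: "optimal N h g W \<sigma>2 L T fB d E t"
    and "W > 0" "\<sigma>2 > 0" "i \<in> {1..N}" "j \<in> {1..N}" "i \<noteq> j" "h i > 0" "h j > 0"
    and "ti > 0" "tj > 0" "Ri \<ge> 0" "Rj \<ge> 0" "ti + tj = t i + t j"
    and "Ri + Rj = rate W \<sigma>2 (h i) (E i) (t i) + rate W \<sigma>2 (h j) (E j) (t j)"
  defines "Ei \<equiv> energy_for_rate W (h i / (\<sigma>2 * W)) ti Ri"
    and "Ej \<equiv> energy_for_rate W (h j / (\<sigma>2 * W)) tj Rj"
  shows "E i * (1 + h i / g i) + E j * (1 + h j / g j) \<le> Ei * (1 + h i / g i) + Ej * (1 + h j / g j)"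
proof -
  have "feasible N h W \<sigma>2 L T fB d (E(i := Ei, j := Ej)) (t(i := ti, j := tj))"
    using opt assms(2-14)
    by (intro feasible_update_pair)
      (simp_all add: optimal_def Ei_def Ej_def energy_for_rate_nonneg rate_energy_for_rate)
  then have "energy_obj N h g E \<le> energy_obj N h g (E(i := Ei, j := Ej))"
    using opt unfolding optimal_def by blast
  then show ?thesis
    using assms(4-6) by (simp add: energy_obj_update_pair left_diff_distrib)
qed

lemma eventually_pos_shift_at_right_0:
  fixes p q :: real
  assumes "p > 0"
  shows "\<forall>\<^sub>F s in at_right 0. p + q * s > 0"
proof -
  have "((\<lambda>s. p + q * s) \<longlongrightarrow> p + q * 0) (at_right 0)"
    by (intro tendsto_intros)
  then show ?thesis
    using assms order_tendstoD(1)[of "\<lambda>s. p + q * s" p "at_right 0" 0] by simp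
qed

lemma has_real_derivative_nonneg_if_eventually_ge_at_right:
  fixes f :: "real \<Rightarrow> real"
  assumes "(f has_real_derivative D) (at x)" "\<forall>\<^sub>F y in at_right x. f x \<le> f y"
  shows "D \<ge> 0"
proof (rule ccontr)
  assume "\<not> D \<ge> 0"
  then obtain \<delta> where "\<delta> > 0" and decr: "\<And>h. h > 0 \<Longrightarrow> h < \<delta> \<Longrightarrow> f (x + h) < f x"
    using DERIV_neg_dec_right[OF assms(1)] by force
  have "\<forall>y>x. y < x + \<delta> \<longrightarrow> f y < f x"
    using decr[of "_ - x"] by simp
  then have "\<forall>\<^sub>F y in at_right x. f y < f x"
    unfolding eventually_at_right_field using \<open>\<delta> > 0\<close> by (intro exI[of _ "x + \<delta>"]) simp
  with assms(2) have "\<forall>\<^sub>F y in at_right x. False"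
    by eventually_elim simp
  then show False
    by simp
qed

lemma optimal_active_pair_eq_marginal_costs:
  fixes h g E t :: "nat \<Rightarrow> real"
  assumes opt: "optimal N h g W \<sigma>2 L T fB d E t"
    and "W > 0" "\<sigma>2 > 0" "i \<noteq> j"
    and active: "\<And>n. n \<in> {i, j} \<Longrightarrow> n \<in> {1..N} \<and> h n > 0 \<and> E n > 0 \<and> t n > 0"
  defines "k \<equiv> \<lambda>n. h n / (\<sigma>2 * W)" and "x \<equiv> \<lambda>n. E n * h n / (t n * \<sigma>2 * W)"
    and "c \<equiv> \<lambda>n. 1 + h n / g n"
  shows "c i * marginal_time_cost (k i) (x i) = c j * marginal_time_cost (k j) (x j)
       \<and> c i * marginal_rate_cost W (k i) (x i) = c j * marginal_rate_cost W (k j) (x j)"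
proof (rule ccontr)
  define a where "a = c j * marginal_time_cost (k j) (x j) - c i * marginal_time_cost (k i) (x i)"
  define b where "b = c j * marginal_rate_cost W (k j) (x j) - c i * marginal_rate_cost W (k i) (x i)"
  assume "\<not> ?thesis"
  then have "a\<^sup>2 + b\<^sup>2 > 0"
    by (auto simp: a_def b_def sum_power2_gt_zero_iff)
  define R where "R n = rate W \<sigma>2 (h n) (E n) (t n)" for n
  have R_ln: "R n = t n * W * ln (1 + x n)" and x_pos: "x n > 0" and k_pos: "k n > 0"
    if "n \<in> {i, j}" for n
    using active[OF that] assms(2,3) by (simp_all add: R_def x_def k_def rate_def)
  have E_R: "energy_for_rate W (k n) (t n) (R n) = E n" if "n \<in> {i, j}" for n
    using active[OF that] assms(2,3) by (simp add: R_def k_def energy_for_rate_rate)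
  define C where "C s = c i * energy_for_rate W (k i) (t i + a * s) (R i + b * s)
                      + c j * energy_for_rate W (k j) (t j - a * s) (R j - b * s)" for s
  have "(C has_real_derivative
          a * (c i * marginal_time_cost (k i) (x i) - c j * marginal_time_cost (k j) (x j))
          + b * (c i * marginal_rate_cost W (k i) (x i) - c j * marginal_rate_cost W (k j) (x j)))
          (at 0)"
    unfolding C_def using active x_pos[of i] x_pos[of j] k_pos R_ln assms(2)
    by (intro energy_for_rate_pair_shift_has_derivative) auto
  also have "a * (c i * marginal_time_cost (k i) (x i) - c j * marginal_time_cost (k j) (x j))
          + b * (c i * marginal_rate_cost W (k i) (x i) - c j * marginal_rate_cost W (k j) (x j))
        = - (a\<^sup>2 + b\<^sup>2)"
    by (simp add: a_def b_def power2_eq_square algebra_simps)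
  finally have "(C has_real_derivative - (a\<^sup>2 + b\<^sup>2)) (at 0)" .
  moreover have "\<forall>\<^sub>F s in at_right 0. C 0 \<le> C s"
  proof -
    have "R n > 0" if "n \<in> {i, j}" for n
      using R_ln[OF that] x_pos[OF that] active[OF that] assms(2) by simp
    then have "\<forall>\<^sub>F s in at_right 0. t i + a * s > 0 \<and> t j + (-a) * s > 0
                                     \<and> R i + b * s > 0 \<and> R j + (-b) * s > 0"
      using active by (intro eventually_conj eventually_pos_shift_at_right_0) auto
    then show ?thesis
    proof eventually_elim
      case (elim s)
      then show ?case
        using optimal_pair_exchange_lower_bound[OF opt assms(2,3), where i = i and j = j
            and ti = "t i + a * s" and tj = "t j - a * s" and Ri = "R i + b * s"
            and Rj = "R j - b * s"] active E_R assms(4)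
        by (simp add: C_def R_def k_def c_def algebra_simps)
    qed
  qed
  ultimately have "- (a\<^sup>2 + b\<^sup>2) \<ge> 0"
    by (rule has_real_derivative_nonneg_if_eventually_ge_at_right)
  with \<open>a\<^sup>2 + b\<^sup>2 > 0\<close> show False
    by simp
qed

theorem lemma2:
  fixes N :: nat and h g E t :: "nat \<Rightarrow> real"
    and W \<sigma>2 L D T fB d :: real
  assumes "N > 0"
    and "\<forall>n\<in>{1..N}. h n > 0 \<and> g n > 0"
    and "W > 0" "\<sigma>2 > 0" "L > 0" "D > 0" "T > 0" "fB > 0"
    and "0 \<le> d" "d \<le> D"
    and "optimal N h g W \<sigma>2 L T fB d E t"
    and "\<forall>n\<in>{1..N}. (E n = 0 \<and> t n = 0) \<or> (E n > 0 \<and> t n > 0)"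
  shows "\<forall>i\<in>{n\<in>{1..N}. E n > 0 \<and> t n > 0}. \<forall>j\<in>{n\<in>{1..N}. E n > 0 \<and> t n > 0}.
           E i * h i / (t i * \<sigma>2 * W) = E j * h j / (t j * \<sigma>2 * W)"
proof (intro ballI)
  fix i j
  assume i: "i \<in> {n\<in>{1..N}. E n > 0 \<and> t n > 0}" and j: "j \<in> {n\<in>{1..N}. E n > 0 \<and> t n > 0}"
  show "E i * h i / (t i * \<sigma>2 * W) = E j * h j / (t j * \<sigma>2 * W)"
  proof (cases "i = j")
    case False
    have active: "n \<in> {1..N} \<and> h n > 0 \<and> E n > 0 \<and> t n > 0" if "n \<in> {i, j}" for n
      using that i j assms(2) by auto
    have "1 + h i / g i > 0"
      using i assms(2) by (simp add: add_pos_pos)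
    note costs = optimal_active_pair_eq_marginal_costs[OF assms(11,3,4) False active]
    show ?thesis
      by (rule eq_snr_if_eq_marginal_costs[OF _ _ _ assms(3) _ _ costs[THEN conjunct1]
            costs[THEN conjunct2]])
        (use active[of i] active[of j] assms(3,4) \<open>1 + h i / g i > 0\<close> in simp_all)
  qed simp
qed

end
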